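(* Let $S:\mathbb Z^d\to\mathbb Z^d$ be an automorphism with $\mathrm{spec}(S)=\{1\}$. Then there are integers $n_1\ge n_2\ge\cdots\ge n_J>0$ with $\sum_j n_j=d$ and a basis of $\mathbb Z^d$ with respect to which $S$ is represented by a matrix $A$ whose block decomposition $A=(B_{\alpha,\beta})_{1\le\alpha,\beta\le J}$ of type $(n_1,\dots,n_J)$ satisfies: (a) $B_{\alpha,\alpha}=I$ for $\alpha=1,\dots,J$; (b) $B_{\alpha,\beta}=0$ for $\alpha<\beta$; (c) $B_{\alpha,\alpha-1}$ has rank $n_\alpha$ for $\alpha=2,\dots,J$.
   Context: The block decomposition of type $(n_1,\dots,n_J)$ of a $d\times d$ matrix $A$ consists of the $n_\alpha\times n_\beta$ matrices $B_{\alpha,\beta}$ whose $(i,j)$ entry is the $(n_1+\cdots+n_{\alpha-1}+i,\ n_1+\cdots+n_{\beta-1}+j)$ entry of $A$. $\mathrm{spec}$ denotes the set of eigenvalues. *)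

theory Defs
  imports "Jordan_Normal_Form.Spectral_Radius" "Jordan_Normal_Form.DL_Rank"
begin

definition block_offset :: "nat list \<Rightarrow> nat \<Rightarrow> nat" where
  "block_offset ns al = sum_list (take al ns)"

text \<open>The block B_{al,be} (0-indexed) of the block decomposition of type ns of A.\<close>
definition block_of :: "'a mat \<Rightarrow> nat list \<Rightarrow> nat \<Rightarrow> nat \<Rightarrow> 'a mat" where
  "block_of A ns al be = mat (ns ! al) (ns ! be)
     (\<lambda>(i, j). A $$ (block_offset ns al + i, block_offset ns be + j))"

definition int_mat_rank :: "int mat \<Rightarrow> nat" where
  "int_mat_rank B = vec_space.rank (dim_row B) (map_mat rat_of_int B)"

end

theory Submission
  imports Defs
begin

(* Let S be an integer d x d matrix whose only complex eigenvalue is 1.  Then N = S - 1 is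
   nilpotent, and we show by induction on d that there is a unimodular P such that
   P^-1 S P = A has the block shape of the theorem.  The induction step:
   (1) Integer row reduction yields a unimodular Q such that the first k rows of Q N vanish and
       the remaining r = d - k rows are linearly independent over the rationals; since N is
       nilpotent and therefore singular, k > 0.
   (2) Then Q N Q^-1 = [[0, 0], [C, N']] with N' nilpotent of size r < d, and the rows of [C N']
       have a rational right inverse.
   (3) By induction, (1 + N') P' = P' A' with A' in block normal form of type ns'.  Conjugating by
       Q^-1 diag(1, P') turns 1 + N into A = [[1, 0], [P'^-1 C, A']].
   (4) The top ns'!0 rows of A' - 1 vanish, so the right inverse from (2) restricts to a right
       inverse of the top ns'!0 rows of P'^-1 C: the new subdiagonal block has full row rank,
       which also gives ns'!0 <= k, so the type k # ns' is again non-increasing. *)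

section \<open>Unipotent matrices are nilpotent after subtracting the identity\<close>

text \<open>A matrix vanishing on and below the diagonal is nilpotent: the entries of its k-th power
  vanish below the k-th superdiagonal.\<close>
lemma strictly_upper_triangular_nilpotent:
  fixes T :: "'a::comm_ring_1 mat"
  assumes T: "T \<in> carrier_mat n n"
    and zero: "\<And>i j. i < n \<Longrightarrow> j < n \<Longrightarrow> j \<le> i \<Longrightarrow> T $$ (i,j) = 0"
  shows "T ^\<^sub>m n = 0\<^sub>m n n"
proof -
  have band: "\<forall>i j. i < n \<longrightarrow> j < n \<longrightarrow> j < i + k \<longrightarrow> (T ^\<^sub>m k) $$ (i,j) = 0" for k
  proof (induction k)
    case 0
    then show ?case using T by auto
  next
    case (Suc k)
    show ?case
    proof (intro allI impI)
      fix i j assume i: "i < n" and j: "j < n" and ji: "j < i + Suc k"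
      have "(T ^\<^sub>m Suc k) $$ (i,j) = (\<Sum>l = 0..<n. (T ^\<^sub>m k) $$ (i,l) * T $$ (l,j))"
        using T i j by (simp add: scalar_prod_def)
      also have "\<dots> = 0"
      proof (rule sum.neutral, intro ballI)
        fix l assume l: "l \<in> {0..<n}"
        show "(T ^\<^sub>m k) $$ (i,l) * T $$ (l,j) = 0"
          using Suc.IH i l zero[of l j] j ji by (cases "l < i + k") auto
      qed
      finally show "(T ^\<^sub>m Suc k) $$ (i,j) = 0" .
    qed
  qed
  show ?thesis
    by (rule eq_matI, insert band[of n] T, auto)
qed

text \<open>Over the complex numbers, a matrix with spectrum {1} is unipotent: by Schur decomposition it
  is similar to an upper triangular matrix with ones on the diagonal.\<close>
lemma spectrum_one_nilpotent:
  fixes A :: "complex mat"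
  assumes A: "A \<in> carrier_mat d d" and sp: "spectrum A = {1}"
  shows "(A - 1\<^sub>m d) ^\<^sub>m d = 0\<^sub>m d d"
proof -
  obtain es where cp: "char_poly A = (\<Prod>a\<leftarrow>es. [:-a,1:])"
    using char_poly_factorized[OF A] by auto
  obtain B P Q where sd: "schur_decomposition A es = (B,P,Q)"
    by (cases "schur_decomposition A es") auto
  from schur_decomposition[OF A cp sd] have sim: "similar_mat_wit A B P Q"
    and ut: "upper_triangular B" and dg: "diag_mat B = es" by auto
  note wit = similar_mat_witD2[OF A sim]
  have B: "B \<in> carrier_mat d d" using wit by auto
  have diag_one: "B $$ (i,i) = 1" if "i < d" for i
  proof -
    have "B $$ (i,i) \<in> set es" using dg that B by (auto simp: diag_mat_def)
    then have "poly (char_poly A) (B $$ (i,i)) = 0" unfolding cp by (rule linear_poly_root)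
    then show ?thesis using spectrum_root_char_poly[OF A] sp by auto
  qed
  have nil: "(B - 1\<^sub>m d) ^\<^sub>m d = 0\<^sub>m d d"
  proof (rule strictly_upper_triangular_nilpotent)
    fix i j assume "i < d" "j < d" "j \<le> i"
    then show "(B - 1\<^sub>m d) $$ (i,j) = 0" using ut B diag_one[of i]
      unfolding upper_triangular_def by (cases "j = i") auto
  qed (use B in auto)
  have sim_shift: "similar_mat_wit (A - 1\<^sub>m d) (B - 1\<^sub>m d) P Q"
  proof (rule similar_mat_witI[of _ _ d])
    show "A - 1\<^sub>m d = P * (B - 1\<^sub>m d) * Q"
      using wit B by (simp add: mult_minus_distrib_mat minus_mult_distrib_mat[of _ d d]
          assoc_mult_mat[of _ d d])
  qed (use wit B in auto)
  show ?thesis unfolding similar_mat_wit_pow_id[OF sim_shift] nil using wit by auto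
qed

lemma unipotent_nilpotent:
  fixes S :: "int mat"
  assumes S: "S \<in> carrier_mat d d" and sp: "spectrum (map_mat complex_of_int S) = {1}"
  shows "(S - 1\<^sub>m d) ^\<^sub>m d = 0\<^sub>m d d"
proof -
  have "map_mat complex_of_int (S - 1\<^sub>m d) = map_mat complex_of_int S - 1\<^sub>m d"
    by (rule eq_matI) (use S in auto)
  moreover have "S - 1\<^sub>m d \<in> carrier_mat d d" using S unfolding carrier_mat_def by auto
  ultimately have "map_mat complex_of_int ((S - 1\<^sub>m d) ^\<^sub>m d) = (map_mat complex_of_int S - 1\<^sub>m d) ^\<^sub>m d"
    using of_int_hom.mat_hom_pow by metis
  also have "\<dots> = 0\<^sub>m d d" by (rule spectrum_one_nilpotent) (use S sp in auto)
  also have "\<dots> = map_mat complex_of_int (0\<^sub>m d d)" by (rule eq_matI) auto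
  finally show ?thesis by (rule of_int_hom.mat_hom_inj)
qed

section \<open>Unimodular matrices\<close>

text \<open>A square matrix is unimodular if it has a two-sided inverse of the same size; for integer
  matrices these are exactly the base changes of the lattice.\<close>
definition unimodular :: "nat \<Rightarrow> 'a::comm_ring_1 mat \<Rightarrow> bool" where
  "unimodular n Q \<longleftrightarrow> Q \<in> carrier_mat n n \<and> (\<exists>Qi \<in> carrier_mat n n. Q * Qi = 1\<^sub>m n \<and> Qi * Q = 1\<^sub>m n)"

lemma unimodularI:
  assumes "Q \<in> carrier_mat n n" "Qi \<in> carrier_mat n n" "Q * Qi = 1\<^sub>m n" "Qi * Q = 1\<^sub>m n"
  shows "unimodular n Q"
  using assms unfolding unimodular_def by blast

lemma unimodularE:
  assumes "unimodular n Q"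
  obtains Qi where "Q \<in> carrier_mat n n" "Qi \<in> carrier_mat n n" "Q * Qi = 1\<^sub>m n" "Qi * Q = 1\<^sub>m n"
  using assms unfolding unimodular_def by blast

lemma unimodular_carrier: "unimodular n Q \<Longrightarrow> Q \<in> carrier_mat n n"
  unfolding unimodular_def by auto

lemma unimodular_one: "unimodular n (1\<^sub>m n)"
  by (rule unimodularI[of _ _ "1\<^sub>m n"]) auto

lemma unimodular_mult:
  assumes "unimodular n A" "unimodular n B"
  shows "unimodular n (A * B)"
proof -
  obtain Ai where A: "A \<in> carrier_mat n n" "Ai \<in> carrier_mat n n" "A * Ai = 1\<^sub>m n" "Ai * A = 1\<^sub>m n"
    using assms(1) by (rule unimodularE)
  obtain Bi where B: "B \<in> carrier_mat n n" "Bi \<in> carrier_mat n n" "B * Bi = 1\<^sub>m n" "Bi * B = 1\<^sub>m n"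
    using assms(2) by (rule unimodularE)
  have "A * B * (Bi * Ai) = A * (B * (Bi * Ai))"
    using assoc_mult_mat[OF A(1) B(1) mult_carrier_mat[OF B(2) A(2)]] .
  also have "B * (Bi * Ai) = B * Bi * Ai" using assoc_mult_mat[OF B(1) B(2) A(2)] by simp
  finally have right: "A * B * (Bi * Ai) = 1\<^sub>m n" using A B by simp
  have "Bi * Ai * (A * B) = Bi * (Ai * (A * B))"
    using assoc_mult_mat[OF B(2) A(2) mult_carrier_mat[OF A(1) B(1)]] .
  also have "Ai * (A * B) = Ai * A * B" using assoc_mult_mat[OF A(2) A(1) B(1)] by simp
  finally have left: "Bi * Ai * (A * B) = 1\<^sub>m n" using A B by simp
  show ?thesis by (rule unimodularI[OF _ _ right left]) (use A B in auto)
qed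

lemma unimodular_swaprows:
  assumes "k < n" "l < n"
  shows "unimodular n (swaprows_mat n k l :: 'a::comm_ring_1 mat)"
  using swaprows_mat_inv[OF assms] by (intro unimodularI[of _ _ "swaprows_mat n k l"]) auto

lemma unimodular_addrow:
  assumes "k < n" "l < n" "k \<noteq> l"
  shows "unimodular n (addrow_mat n (a::'a::comm_ring_1) k l)"
  using addrow_mat_inv[OF assms, of a] addrow_mat_inv[OF assms, of "-a"]
  by (intro unimodularI[of _ _ "addrow_mat n (-a) k l"]) auto

lemma unimodular_block_diag:
  assumes A: "unimodular m (A::'a::comm_ring_1 mat)" and B: "unimodular n B"
  shows "unimodular (m + n) (four_block_mat A (0\<^sub>m m n) (0\<^sub>m n m) B)"
proof -
  obtain Ai where Ai: "A \<in> carrier_mat m m" "Ai \<in> carrier_mat m m" "A * Ai = 1\<^sub>m m" "Ai * A = 1\<^sub>m m"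
    using A by (rule unimodularE)
  obtain Bi where Bi: "B \<in> carrier_mat n n" "Bi \<in> carrier_mat n n" "B * Bi = 1\<^sub>m n" "Bi * B = 1\<^sub>m n"
    using B by (rule unimodularE)
  let ?X = "four_block_mat A (0\<^sub>m m n) (0\<^sub>m n m) B"
  let ?Y = "four_block_mat Ai (0\<^sub>m m n) (0\<^sub>m n m) Bi"
  have "?X * ?Y = four_block_mat (1\<^sub>m m) (0\<^sub>m m n) (0\<^sub>m n m) (1\<^sub>m n)"
    by (subst mult_four_block_mat[of _ m m _ n _ n _ _ m _ n], insert Ai Bi, auto)
  moreover have "?Y * ?X = four_block_mat (1\<^sub>m m) (0\<^sub>m m n) (0\<^sub>m n m) (1\<^sub>m n)"
    by (subst mult_four_block_mat[of _ m m _ n _ n _ _ m _ n], insert Ai Bi, auto)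
  ultimately show ?thesis using Ai Bi by (intro unimodularI[of _ _ ?Y]) auto
qed

lemma unimodular_invertible_mat: "unimodular n P \<Longrightarrow> invertible_mat P"
  unfolding invertible_mat_def inverts_mat_def by (elim unimodularE) auto

section \<open>Integer row reduction\<close>

definition lin_indep_rows :: "'a::field mat \<Rightarrow> bool" where
  "lin_indep_rows T \<longleftrightarrow>
     (\<forall>y. (\<forall>j<dim_col T. (\<Sum>i<dim_row T. y i * T $$ (i,j)) = 0) \<longrightarrow> (\<forall>i<dim_row T. y i = 0))"

definition lower_rows :: "nat \<Rightarrow> int mat \<Rightarrow> rat mat" where
  "lower_rows k M = mat (dim_row M - k) (dim_col M) (\<lambda>(i,j). rat_of_int (M $$ (k + i, j)))"

lemma lower_rows_carrier: "lower_rows k M \<in> carrier_mat (dim_row M - k) (dim_col M)"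
  unfolding lower_rows_def by simp

lemma lin_indep_lower_rows_iff:
  "lin_indep_rows (lower_rows k M) \<longleftrightarrow>
     (\<forall>y. (\<forall>j<dim_col M. (\<Sum>i<dim_row M - k. y i * rat_of_int (M $$ (k + i, j))) = 0) \<longrightarrow>
          (\<forall>i<dim_row M - k. y i = 0))"
proof -
  have "(\<Sum>i<dim_row M - k. y i * lower_rows k M $$ (i,j))
      = (\<Sum>i<dim_row M - k. y i * rat_of_int (M $$ (k + i, j)))" if "j < dim_col M" for y j
    using that unfolding lower_rows_def by (intro sum.cong) auto
  then show ?thesis unfolding lin_indep_rows_def using lower_rows_carrier[of k M] by auto
qed

definition row_echelon_by :: "int mat \<Rightarrow> nat \<Rightarrow> int mat \<Rightarrow> bool" where
  "row_echelon_by Q k M \<longleftrightarrow> unimodular (dim_row M) Q \<and> k \<le> dim_row M \<and>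
     (\<forall>i<k. \<forall>j<dim_col M. (Q * M) $$ (i,j) = 0) \<and> lin_indep_rows (lower_rows k (Q * M))"

text \<open>One step of the Euclidean algorithm on two nonzero entries of a column.\<close>
lemma abs_reduce_step:
  fixes x y :: int
  assumes "x \<noteq> 0" "y \<noteq> 0" "\<bar>y\<bar> \<le> \<bar>x\<bar>"
  shows "\<bar>(- sgn (x * y)) * y + x\<bar> < \<bar>x\<bar>"
  using assms by (cases "x > 0"; cases "y > 0") (auto simp: sgn_mult abs_if)

lemma column_euclid_step:
  fixes M :: "int mat"
  assumes M: "M \<in> carrier_mat d c" and j0: "j0 < c"
    and i: "i1 < d" "i2 < d" "i1 \<noteq> i2" "M $$ (i1,j0) \<noteq> 0" "M $$ (i2,j0) \<noteq> 0"
      "\<bar>M $$ (i2,j0)\<bar> \<le> \<bar>M $$ (i1,j0)\<bar>"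
  shows "\<exists>E. unimodular d E \<and> (\<Sum>i<d. nat \<bar>(E * M) $$ (i,j0)\<bar>) < (\<Sum>i<d. nat \<bar>M $$ (i,j0)\<bar>)"
proof -
  define a where "a = - sgn (M $$ (i1,j0) * M $$ (i2,j0))"
  define E where "E = addrow_mat d a i1 i2"
  have EM: "E * M = addrow a i1 i2 M" unfolding E_def using addrow_mat[OF M i(2)] by simp
  have entry: "(E * M) $$ (i, j0) = (if i = i1 then a * M $$ (i2,j0) + M $$ (i1,j0) else M $$ (i,j0))"
    if "i < d" for i using that M j0 unfolding EM by auto
  have "(\<Sum>i<d. nat \<bar>(E * M) $$ (i,j0)\<bar>) < (\<Sum>i<d. nat \<bar>M $$ (i,j0)\<bar>)"
  proof (rule sum_strict_mono_ex1)
    show "\<forall>i\<in>{..<d}. nat \<bar>(E * M) $$ (i,j0)\<bar> \<le> nat \<bar>M $$ (i,j0)\<bar>"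
      using entry abs_reduce_step[OF i(4-6)] unfolding a_def by auto
    show "\<exists>i\<in>{..<d}. nat \<bar>(E * M) $$ (i,j0)\<bar> < nat \<bar>M $$ (i,j0)\<bar>"
      using entry[OF i(1)] abs_reduce_step[OF i(4-6)] i(1) unfolding a_def
      by (intro bexI[of _ i1]) auto
  qed simp
  then show ?thesis using unimodular_addrow[OF i(1-3)] unfolding E_def by blast
qed

lemma column_single_entry:
  fixes M :: "int mat"
  assumes M: "M \<in> carrier_mat d c" and j0: "j0 < c"
    and single: "\<And>i i0. i < d \<Longrightarrow> i0 < d \<Longrightarrow> i \<noteq> i0 \<Longrightarrow> M $$ (i0,j0) \<noteq> 0 \<Longrightarrow> M $$ (i,j0) = 0"
  shows "\<exists>Q. unimodular d Q \<and> (\<forall>i < d - 1. (Q * M) $$ (i, j0) = 0)"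
proof (cases "\<exists>i0 < d. M $$ (i0,j0) \<noteq> 0")
  case True
  then obtain i0 where i0: "i0 < d" "M $$ (i0,j0) \<noteq> 0" by blast
  have last: "d - 1 < d" using i0 by auto
  define E where "E = (swaprows_mat d (d - 1) i0 :: int mat)"
  have EM: "E * M = swaprows (d - 1) i0 M" unfolding E_def using swaprows_mat[OF M last i0(1)] by simp
  have "\<forall>i < d - 1. (E * M) $$ (i, j0) = 0" unfolding EM using M j0 single[OF _ i0(1) _ i0(2)] by auto
  then show ?thesis using unimodular_swaprows[OF last i0(1)] unfolding E_def by blast
next
  case False
  then show ?thesis using M by (intro exI[of _ "1\<^sub>m d"]) (auto simp: unimodular_one)
qed

lemma clear_column:
  fixes M :: "int mat"
  assumes "M \<in> carrier_mat d c" and "j0 < c"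
  shows "\<exists>Q. unimodular d Q \<and> (\<forall>i < d - 1. (Q * M) $$ (i, j0) = 0)"
  using assms
proof (induction "\<Sum>i<d. nat \<bar>M $$ (i,j0)\<bar>" arbitrary: M rule: less_induct)
  case less
  note M = less.prems(1) and j0 = less.prems(2)
  show ?case
  proof (cases "\<exists>i1 i2. i1 < d \<and> i2 < d \<and> i1 \<noteq> i2 \<and> M $$ (i1,j0) \<noteq> 0 \<and> M $$ (i2,j0) \<noteq> 0
     \<and> \<bar>M $$ (i2,j0)\<bar> \<le> \<bar>M $$ (i1,j0)\<bar>")
    case True
    then obtain E where E: "unimodular d E"
      and smaller: "(\<Sum>i<d. nat \<bar>(E * M) $$ (i,j0)\<bar>) < (\<Sum>i<d. nat \<bar>M $$ (i,j0)\<bar>)"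
      using column_euclid_step[OF M j0] by blast
    have "E * M \<in> carrier_mat d c" using unimodular_carrier[OF E] M by simp
    from less.hyps[OF smaller this j0] obtain Q
      where Q: "unimodular d Q" "\<forall>i < d - 1. (Q * (E * M)) $$ (i, j0) = 0" by blast
    have "Q * (E * M) = Q * E * M" using unimodular_carrier[OF Q(1)] unimodular_carrier[OF E] M
      by (simp add: assoc_mult_mat[of _ d d _ d _ c])
    then show ?thesis using Q unimodular_mult[OF Q(1) E] by (intro exI[of _ "Q * E"]) auto
  next
    case False
    then have "M $$ (i,j0) = 0" if "i < d" "i0 < d" "i \<noteq> i0" "M $$ (i0,j0) \<noteq> 0" for i i0
      using that by (cases "\<bar>M $$ (i,j0)\<bar> \<le> \<bar>M $$ (i0,j0)\<bar>") force+
    then show ?thesis using column_single_entry[OF M j0] by blast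
  qed
qed

lemma unimodular_column_nonzero:
  assumes Q: "unimodular d Q" and M: "M \<in> carrier_mat d c" and j: "j < c"
    and i0: "i0 < d" "M $$ (i0,j) \<noteq> 0"
  shows "\<exists>i<d. (Q * M) $$ (i,j) \<noteq> 0"
proof (rule ccontr)
  assume "\<not> ?thesis"
  then have zero_col: "col (Q * M) j = 0\<^sub>v d"
    using Q M j by (intro eq_vecI) (auto dest: unimodular_carrier)
  obtain Qi where Qi: "Q \<in> carrier_mat d d" "Qi \<in> carrier_mat d d" "Qi * Q = 1\<^sub>m d"
    using Q by (rule unimodularE)
  have "Qi * (Q * M) = Qi * Q * M" using assoc_mult_mat[OF Qi(2) Qi(1) M] by simp
  then have "M = Qi * (Q * M)" using Qi M by simp
  then have "M $$ (i0,j) = row Qi i0 \<bullet> col (Q * M) j"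
    using Qi M i0 j by (metis index_mult_mat(1) carrier_matD mult_carrier_mat)
  then show False using zero_col Qi i0 by simp
qed

lemma row_echelon_by_mult:
  assumes re: "row_echelon_by Q k (Q1 * M)" and Q1: "unimodular d Q1" and M: "M \<in> carrier_mat d c"
  shows "row_echelon_by (Q * Q1) k M"
proof -
  have Q1c: "Q1 \<in> carrier_mat d d" using unimodular_carrier[OF Q1] .
  then have Q: "unimodular d Q" using re unfolding row_echelon_by_def by simp
  have "Q * Q1 * M = Q * (Q1 * M)" using assoc_mult_mat[OF unimodular_carrier[OF Q] Q1c M] .
  then show ?thesis using re Q1c M unimodular_mult[OF Q Q1] unfolding row_echelon_by_def by simp
qed

lemma row_echelon_zero_column:
  assumes M: "M \<in> carrier_mat d (Suc c)" and zero: "\<forall>i<d. M $$ (i,0) = 0"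
    and re: "row_echelon_by Q k (mat d c (\<lambda>(i,j). M $$ (i, Suc j)))"
  shows "row_echelon_by Q k M"
proof -
  define M' where "M' = mat d c (\<lambda>(i,j). M $$ (i, Suc j))"
  have M': "M' \<in> carrier_mat d c" unfolding M'_def by auto
  have Q: "unimodular d Q" and k: "k \<le> d" and top: "\<forall>i<k. \<forall>j<c. (Q * M') $$ (i,j) = 0"
    and indep0: "lin_indep_rows (lower_rows k (Q * M'))"
    using re M' unfolding row_echelon_by_def M'_def[symmetric] by auto
  have Qc: "Q \<in> carrier_mat d d" using unimodular_carrier[OF Q] .
  have indep: "\<forall>y. (\<forall>j<c. (\<Sum>i<d-k. y i * rat_of_int ((Q * M') $$ (k+i,j))) = 0) \<longrightarrow> (\<forall>i<d-k. y i = 0)"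
    using indep0 Qc M' unfolding lin_indep_lower_rows_iff by simp
  have shifted: "(Q * M) $$ (i, Suc j) = (Q * M') $$ (i,j)" if "i < d" "j < c" for i j
  proof -
    have "col M (Suc j) = col M' j" using that M unfolding M'_def by (intro eq_vecI) auto
    then show ?thesis using that M M' Qc by simp
  qed
  have first: "(Q * M) $$ (i, 0) = 0" if "i < d" for i
  proof -
    have "col M 0 = 0\<^sub>v d" using zero M by (intro eq_vecI) auto
    then show ?thesis using that M Qc by simp
  qed
  have "\<forall>y. (\<forall>j<Suc c. (\<Sum>i<d-k. y i * rat_of_int ((Q * M) $$ (k+i,j))) = 0) \<longrightarrow> (\<forall>i<d-k. y i = 0)"
  proof (rule allI, rule impI)
    fix y :: "nat \<Rightarrow> rat"
    assume h: "\<forall>j<Suc c. (\<Sum>i<d-k. y i * rat_of_int ((Q * M) $$ (k+i,j))) = 0"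
    have "(\<Sum>i<d-k. y i * rat_of_int ((Q * M') $$ (k+i,j))) = 0" if "j < c" for j
    proof -
      have "(\<Sum>i<d-k. y i * rat_of_int ((Q * M') $$ (k+i,j)))
          = (\<Sum>i<d-k. y i * rat_of_int ((Q * M) $$ (k+i,Suc j)))"
        using shifted that by (intro sum.cong) auto
      then show ?thesis using h that by simp
    qed
    then show "\<forall>i<d-k. y i = 0" using indep by blast
  qed
  moreover have "\<forall>i<k. \<forall>j<Suc c. (Q * M) $$ (i,j) = 0"
    using first shifted top k by (auto simp: less_Suc_eq_0_disj)
  ultimately show ?thesis using Q k M Qc unfolding row_echelon_by_def lin_indep_lower_rows_iff by simp
qed

lemma pivot_block_entries:
  fixes M Q :: "'a::comm_ring_1 mat"
  assumes M: "M \<in> carrier_mat d (Suc c)" and d: "0 < d" and above: "\<forall>i<d-1. M $$ (i,0) = 0"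
    and Q: "Q \<in> carrier_mat (d-1) (d-1)"
  defines "E \<equiv> four_block_mat Q (0\<^sub>m (d-1) 1) (0\<^sub>m 1 (d-1)) (1\<^sub>m 1)"
  shows "\<And>i j. i < d-1 \<Longrightarrow> j < c \<Longrightarrow>
           (E * M) $$ (i, Suc j) = (Q * mat (d-1) c (\<lambda>(i,j). M $$ (i, Suc j))) $$ (i,j)"
    and "\<And>i. i < d \<Longrightarrow> (E * M) $$ (i, 0) = (if i < d-1 then 0 else M $$ (d-1, 0))"
proof -
  define M2 where "M2 = mat (d-1) c (\<lambda>(i,j). M $$ (i, Suc j))"
  define m2 where "m2 = mat 1 c (\<lambda>(i,j). M $$ (d-1, Suc j))"
  define G where "G = mat 1 1 (\<lambda>_. M $$ (d-1, 0))"
  have M2: "M2 \<in> carrier_mat (d-1) c" and G: "G \<in> carrier_mat 1 1" and m2: "m2 \<in> carrier_mat 1 c"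
    unfolding M2_def G_def m2_def by auto
  have Mblk: "M = four_block_mat (0\<^sub>m (d-1) 1) M2 G m2"
  proof (rule eq_matI)
    fix i j assume "i < dim_row (four_block_mat (0\<^sub>m (d-1) 1) M2 G m2)"
      "j < dim_col (four_block_mat (0\<^sub>m (d-1) 1) M2 G m2)"
    then have i: "i < d" and j: "j < Suc c" using d M2 G m2 by auto
    have "i < d - 1 \<or> i = d - 1" using i by auto
    then show "M $$ (i,j) = four_block_mat (0\<^sub>m (d-1) 1) M2 G m2 $$ (i,j)"
      using i j above d unfolding M2_def G_def m2_def by (cases j) auto
  qed (use M d M2 G m2 in auto)
  have "E * M = four_block_mat (0\<^sub>m (d-1) 1) (Q * M2) G m2"
    unfolding E_def Mblk
    by (subst mult_four_block_mat[OF Q zero_carrier_mat[of "d-1" 1] zero_carrier_mat[of 1 "d-1"]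
          one_carrier_mat[of 1] zero_carrier_mat[of "d-1" 1] M2 G m2], insert Q M2 G m2, auto)
  then show "\<And>i j. i < d-1 \<Longrightarrow> j < c \<Longrightarrow> (E * M) $$ (i, Suc j) = (Q * M2) $$ (i,j)"
    and "\<And>i. i < d \<Longrightarrow> (E * M) $$ (i, 0) = (if i < d-1 then 0 else M $$ (d-1, 0))"
    using Q M2 d by (auto simp: G_def m2_def)
qed

text \<open>Reducing the top d - 1 rows of the remaining columns gives a row echelon form, since
  the pivot row is independent of the rows above it.\<close>
lemma row_echelon_pivot:
  assumes M: "M \<in> carrier_mat d (Suc c)" and d: "0 < d"
    and above: "\<forall>i<d-1. M $$ (i,0) = 0" and pivot: "M $$ (d-1,0) \<noteq> 0"
    and re: "row_echelon_by Q k (mat (d-1) c (\<lambda>(i,j). M $$ (i, Suc j)))"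
  shows "row_echelon_by (four_block_mat Q (0\<^sub>m (d-1) 1) (0\<^sub>m 1 (d-1)) (1\<^sub>m 1)) k M"
proof -
  define M2 where "M2 = mat (d-1) c (\<lambda>(i,j). M $$ (i, Suc j))"
  define E where "E = four_block_mat Q (0\<^sub>m (d-1) 1) (0\<^sub>m 1 (d-1)) (1\<^sub>m 1)"
  have M2: "M2 \<in> carrier_mat (d-1) c" unfolding M2_def by auto
  have Q: "unimodular (d-1) Q" and k: "k \<le> d-1" and top: "\<forall>i<k. \<forall>j<c. (Q * M2) $$ (i,j) = 0"
    and indep0: "lin_indep_rows (lower_rows k (Q * M2))"
    using re M2 unfolding row_echelon_by_def M2_def[symmetric] by auto
  have Qc: "Q \<in> carrier_mat (d-1) (d-1)" using unimodular_carrier[OF Q] .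
  have indep: "\<forall>y. (\<forall>j<c. (\<Sum>i<d-1-k. y i * rat_of_int ((Q * M2) $$ (k+i,j))) = 0) \<longrightarrow>
      (\<forall>i<d-1-k. y i = 0)"
    using indep0 Qc M2 unfolding lin_indep_lower_rows_iff by simp
  have E: "unimodular d E" using unimodular_block_diag[OF Q unimodular_one[of 1]] d unfolding E_def by simp
  note shifted = pivot_block_entries(1)[OF M d above Qc, folded E_def M2_def]
  note first = pivot_block_entries(2)[OF M d above Qc, folded E_def]
  have zero_rows: "\<forall>i<k. \<forall>j<Suc c. (E * M) $$ (i,j) = 0"
    using first shifted top k by (auto simp: less_Suc_eq_0_disj)
  have "\<forall>i<d-k. y i = 0"
    if h: "\<forall>j<Suc c. (\<Sum>i<d-k. y i * rat_of_int ((E * M) $$ (k+i,j))) = 0" for y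
  proof -
    define t where "t = d - 1 - k"
    have dk: "d - k = Suc t" and kt: "k + t = d - 1" unfolding t_def using k d by auto
    have "(\<Sum>i<Suc t. y i * rat_of_int ((E * M) $$ (k+i,0))) = y t * rat_of_int (M $$ (d-1,0))"
      using first kt d by (simp add: sum.neutral)
    then have yt: "y t = 0" using h[rule_format, of 0] pivot unfolding dk by simp
    have "(\<Sum>i<d-1-k. y i * rat_of_int ((Q * M2) $$ (k+i,j))) = 0" if j: "j < c" for j
    proof -
      have "(\<Sum>i<d-1-k. y i * rat_of_int ((Q * M2) $$ (k+i,j)))
          = (\<Sum>i<t. y i * rat_of_int ((E * M) $$ (k+i,Suc j)))"
        using shifted j unfolding t_def by (intro sum.cong) auto
      also have "\<dots> = (\<Sum>i<Suc t. y i * rat_of_int ((E * M) $$ (k+i,Suc j)))" using yt by simp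
      finally show ?thesis using h[rule_format, of "Suc j"] j unfolding dk by simp
    qed
    then have "\<forall>i<t. y i = 0" using indep unfolding t_def by blast
    then show ?thesis using yt dk less_Suc_eq by auto
  qed
  then show ?thesis
    using E zero_rows k M unimodular_carrier[OF E]
    unfolding row_echelon_by_def lin_indep_lower_rows_iff E_def[symmetric] by auto
qed

lemma integer_row_echelon:
  assumes "M \<in> carrier_mat d c"
  shows "\<exists>Q k. row_echelon_by Q k M"
  using assms
proof (induction c arbitrary: d M)
  case 0
  then have "row_echelon_by (1\<^sub>m d) d M"
    unfolding row_echelon_by_def lin_indep_lower_rows_iff by (auto simp: unimodular_one)
  then show ?case by blast
next
  case (Suc c)
  note M = Suc.prems
  show ?case
  proof (cases "\<forall>i<d. M $$ (i,0) = 0")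
    case True
    obtain Q k where "row_echelon_by Q k (mat d c (\<lambda>(i,j). M $$ (i, Suc j)))"
      using Suc.IH[of "mat d c (\<lambda>(i,j). M $$ (i, Suc j))" d] by auto
    then show ?thesis using row_echelon_zero_column[OF M True] by blast
  next
    case False
    then obtain i0 where i0: "i0 < d" "M $$ (i0,0) \<noteq> 0" by blast
    then have d: "0 < d" by simp
    obtain Q1 where Q1: "unimodular d Q1" and above: "\<forall>i<d-1. (Q1 * M) $$ (i,0) = 0"
      using clear_column[OF M, of 0] by auto
    have Q1M: "Q1 * M \<in> carrier_mat d (Suc c)" using unimodular_carrier[OF Q1] M by auto
    obtain i where "i < d" "(Q1 * M) $$ (i,0) \<noteq> 0"
      using unimodular_column_nonzero[OF Q1 M _ i0] by auto
    then have pivot: "(Q1 * M) $$ (d-1,0) \<noteq> 0" using above by (metis Suc_pred' d less_SucE)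
    obtain Q2 k where "row_echelon_by Q2 k (mat (d-1) c (\<lambda>(i,j). (Q1 * M) $$ (i, Suc j)))"
      using Suc.IH[of "mat (d-1) c (\<lambda>(i,j). (Q1 * M) $$ (i, Suc j))" "d-1"] by auto
    from row_echelon_pivot[OF Q1M d above pivot this]
    show ?thesis using row_echelon_by_mult[OF _ Q1 M] by blast
  qed
qed

section \<open>Rank facts over the rationals\<close>

text \<open>The Gram matrix T T^t of a matrix with independent rows over an ordered field is
  nonsingular: T^t v = 0 follows from v^t T T^t v = 0.\<close>
lemma lin_indep_rows_gram_det:
  fixes T :: "'a::linordered_field mat"
  assumes T: "T \<in> carrier_mat n c" and indep: "lin_indep_rows T"
  shows "det (T * transpose_mat T) \<noteq> 0"
proof
  let ?Tt = "transpose_mat T"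
  have Tt: "?Tt \<in> carrier_mat c n" using T by auto
  have G: "T * ?Tt \<in> carrier_mat n n" using T by auto
  assume "det (T * ?Tt) = 0"
  then obtain v where v: "v \<in> carrier_vec n" "v \<noteq> 0\<^sub>v n" "(T * ?Tt) *\<^sub>v v = 0\<^sub>v n"
    using det_0_iff_vec_prod_zero_field[OF G] by auto
  define w where "w = ?Tt *\<^sub>v v"
  have w: "w \<in> carrier_vec c" using Tt v unfolding w_def by auto
  have "T *\<^sub>v w = 0\<^sub>v n" using assoc_mult_mat_vec[OF T Tt v(1)] v(3) unfolding w_def by simp
  then have "w \<bullet> w = 0"
    using transpose_vec_mult_scalar[OF T w v(1)] v(1) unfolding w_def by simp
  then have "(\<Sum>j\<in>{0..<c}. w $ j * w $ j) = 0" unfolding scalar_prod_def using w by simp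
  then have w0: "w $ j = 0" if "j < c" for j
    using sum_nonneg_eq_0_iff[of "{0..<c}" "\<lambda>j. w $ j * w $ j"] that by auto
  have "(\<Sum>i<dim_row T. v $ i * T $$ (i,j)) = 0" if j: "j < dim_col T" for j
  proof -
    have "w $ j = (\<Sum>i\<in>{0..<n}. T $$ (i,j) * v $ i)"
      unfolding w_def using j T v by (simp add: scalar_prod_def)
    then show ?thesis using w0[of j] j T by (simp add: atLeast0LessThan mult.commute)
  qed
  then have "\<forall>i<n. v $ i = 0" using indep T unfolding lin_indep_rows_def by auto
  then have "v = 0\<^sub>v n" using v(1) by (intro eq_vecI) auto
  with v show False by auto
qed

text \<open>A matrix with independent rows has a right inverse, namely T^t (T T^t)^-1.\<close>
lemma lin_indep_rows_right_inverse:
  fixes T :: "'a::linordered_field mat"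
  assumes T: "T \<in> carrier_mat n c" and indep: "lin_indep_rows T"
  obtains R where "R \<in> carrier_mat c n" "T * R = 1\<^sub>m n"
proof -
  let ?Tt = "transpose_mat T"
  have Tt: "?Tt \<in> carrier_mat c n" and G: "T * ?Tt \<in> carrier_mat n n" using T by auto
  from det_non_zero_imp_unit[OF G lin_indep_rows_gram_det[OF T indep], of "()"]
  obtain B where B: "B \<in> carrier_mat n n" "T * ?Tt * B = 1\<^sub>m n"
    unfolding Units_def by (auto simp: ring_mat_simps)
  have "T * (?Tt * B) = 1\<^sub>m n" using B(2) assoc_mult_mat[OF T Tt B(1)] by simp
  then show ?thesis using that[of "?Tt * B"] Tt B(1) by auto
qed

lemma right_inverse_rank:
  fixes B :: "'a::field mat"
  assumes B: "B \<in> carrier_mat n m" and R: "R \<in> carrier_mat m n" and BR: "B * R = 1\<^sub>m n"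
  shows "vec_space.rank n B = n"
proof -
  interpret vec_space "TYPE('a)" n .
  have "col_space B = carrier_vec n"
  proof
    show "col_space B \<subseteq> carrier_vec n" using col_space_eq[OF B] B by auto
    show "carrier_vec n \<subseteq> col_space B"
    proof
      fix y :: "'a vec" assume y: "y \<in> carrier_vec n"
      have "B *\<^sub>v (R *\<^sub>v y) = y" using assoc_mult_mat_vec[OF B R y, symmetric] BR y by simp
      moreover have "R *\<^sub>v y \<in> carrier_vec (dim_col B)" using R B y by auto
      ultimately show "y \<in> col_space B" using col_space_eq[OF B] B y by auto
    qed
  qed
  then have span: "span (set (cols B)) = carrier_vec n" unfolding col_space_def .
  have V: "vs (carrier_vec n) = V" unfolding module_vec_def by simp
  have "rank B = dim" unfolding rank_def span V by simp
  then show ?thesis using dim_is_n by simp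
qed

lemma right_inverse_int_rank:
  assumes B: "B \<in> carrier_mat n m" and R: "R \<in> carrier_mat m n"
    and BR: "map_mat rat_of_int B * R = 1\<^sub>m n"
  shows "int_mat_rank B = n" and "n \<le> m"
proof -
  have Bq: "map_mat rat_of_int B \<in> carrier_mat n m" using B by auto
  have rank: "vec_space.rank n (map_mat rat_of_int B) = n" by (rule right_inverse_rank[OF Bq R BR])
  then show "int_mat_rank B = n" unfolding int_mat_rank_def using B by auto
  show "n \<le> m" using vec_space.rank_le_nc[OF Bq] rank by simp
qed

lemma det_pow_mat:
  assumes A: "A \<in> carrier_mat n n"
  shows "det (A ^\<^sub>m m) = det A ^ m"
proof (induction m)
  case (Suc m)
  have "det (A ^\<^sub>m Suc m) = det (A ^\<^sub>m m) * det A" by (simp add: det_mult[OF pow_carrier_mat[OF A] A])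
  then show ?case using Suc by simp
qed simp

text \<open>A nonempty nilpotent matrix is singular, so it cannot be a factor of the identity.\<close>
lemma nilpotent_not_factor_of_one:
  fixes N :: "'a::field mat"
  assumes X: "X \<in> carrier_mat d d" and N: "N \<in> carrier_mat d d" and Y: "Y \<in> carrier_mat d d"
    and XNY: "X * N * Y = 1\<^sub>m d" and nil: "N ^\<^sub>m m = 0\<^sub>m d d" and d: "0 < d"
  shows False
proof -
  have "det (X * N * Y) = det X * det N * det Y"
    using det_mult[OF mult_carrier_mat[OF X N] Y] det_mult[OF X N] by simp
  then have "det X * det N * det Y = 1" using XNY by simp
  then have "det N \<noteq> 0" by (metis mult_zero_left mult_zero_right zero_neq_one)
  then have "det (N ^\<^sub>m m) \<noteq> 0" using det_pow_mat[OF N] by simp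
  then show False using nil d by simp
qed

section \<open>Block decompositions\<close>

lemma block_offset_0: "block_offset ns 0 = 0"
  unfolding block_offset_def by simp

lemma block_offset_Cons_Suc: "block_offset (k # ns) (Suc al) = k + block_offset ns al"
  unfolding block_offset_def by simp

lemma block_offset_bound:
  assumes "al < length ns"
  shows "block_offset ns al + ns ! al \<le> sum_list ns"
proof -
  have "block_offset ns al + ns ! al = sum_list (take (Suc al) ns)"
    unfolding block_offset_def using assms by (simp add: take_Suc_conv_app_nth)
  also have "\<dots> \<le> sum_list (take (Suc al) ns) + sum_list (drop (Suc al) ns)" by simp
  also have "\<dots> = sum_list ns" by (metis append_take_drop_id sum_list_append)
  finally show ?thesis .
qed

lemma block_offset_ge_first:
  assumes "0 < be" and "ns \<noteq> []"
  shows "ns ! 0 \<le> block_offset ns be"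
proof -
  obtain n ns' where ns: "ns = n # ns'" using assms(2) by (cases ns) auto
  obtain be' where "be = Suc be'" using assms(1) by (cases be) auto
  then show ?thesis using ns by (simp add: block_offset_Cons_Suc)
qed

lemma block_index_exists:
  assumes "j < sum_list ns"
  shows "\<exists>be < length ns. \<exists>j' < ns ! be. j = block_offset ns be + j'"
  using assms
proof (induction ns arbitrary: j)
  case (Cons a ns)
  show ?case
  proof (cases "j < a")
    case True
    then show ?thesis by (intro exI[of _ 0]) (auto simp: block_offset_0)
  next
    case False
    then have "j - a < sum_list ns" using Cons.prems by simp
    from Cons.IH[OF this] obtain be j' where "be < length ns" "j' < ns ! be"
      "j - a = block_offset ns be + j'" by blast
    then show ?thesis using False by (intro exI[of _ "Suc be"]) (auto simp: block_offset_Cons_Suc)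
  qed
qed simp

lemma block_of_four_block:
  assumes A: "A = four_block_mat B11 B12 B21 A'" and B11: "B11 \<in> carrier_mat k k"
    and B12: "B12 \<in> carrier_mat k r" and A': "A' \<in> carrier_mat r r" and r: "sum_list ns = r"
  shows "block_of A (k # ns) 0 0 = B11"
    and "\<And>be. be < length ns \<Longrightarrow>
      block_of A (k # ns) 0 (Suc be) = mat k (ns ! be) (\<lambda>(i,j). B12 $$ (i, block_offset ns be + j))"
    and "ns \<noteq> [] \<Longrightarrow> block_of A (k # ns) 1 0 = mat (ns ! 0) k (\<lambda>(i,j). B21 $$ (i, j))"
    and "\<And>al be. al < length ns \<Longrightarrow> be < length ns \<Longrightarrow>
      block_of A (k # ns) (Suc al) (Suc be) = block_of A' ns al be"
proof -
  have bound: "block_offset ns al + ns ! al \<le> r" if "al < length ns" for al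
    using block_offset_bound[OF that] r by simp
  show "block_of A (k # ns) 0 0 = B11"
    unfolding block_of_def by (rule eq_matI) (use B11 A' in \<open>auto simp: A block_offset_0\<close>)
  show "block_of A (k # ns) 0 (Suc be) = mat k (ns ! be) (\<lambda>(i,j). B12 $$ (i, block_offset ns be + j))"
    if "be < length ns" for be
    unfolding block_of_def using bound[OF that] B11 B12 A' that
    by (intro eq_matI) (auto simp: A block_offset_Cons_Suc block_offset_0)
  show "block_of A (k # ns) 1 0 = mat (ns ! 0) k (\<lambda>(i,j). B21 $$ (i, j))" if "ns \<noteq> []"
    unfolding block_of_def using bound[of 0] that B11 A'
    by (intro eq_matI) (auto simp: A block_offset_0 block_offset_def)
  show "block_of A (k # ns) (Suc al) (Suc be) = block_of A' ns al be"
    if "al < length ns" "be < length ns" for al be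
    unfolding block_of_def using bound[OF that(1)] bound[OF that(2)] B11 A' that
    by (intro eq_matI) (auto simp: A block_offset_Cons_Suc)
qed

definition block_normal_form :: "nat list \<Rightarrow> int mat \<Rightarrow> bool" where
  "block_normal_form ns A \<longleftrightarrow>
     sorted_wrt (\<ge>) ns \<and> (\<forall>n \<in> set ns. n > 0) \<and> A \<in> carrier_mat (sum_list ns) (sum_list ns) \<and>
     (\<forall>al < length ns. block_of A ns al al = 1\<^sub>m (ns ! al)) \<and>
     (\<forall>al be. al < be \<and> be < length ns \<longrightarrow> block_of A ns al be = 0\<^sub>m (ns ! al) (ns ! be)) \<and>
     (\<forall>al. 1 \<le> al \<and> al < length ns \<longrightarrow> int_mat_rank (block_of A ns al (al - 1)) = ns ! al)"

lemma block_normal_form_top_rows: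
  assumes nf: "block_normal_form ns A" and ne: "ns \<noteq> []"
    and i: "i < ns ! 0" and j: "j < sum_list ns"
  shows "A $$ (i,j) = (if i = j then 1 else 0)"
proof -
  obtain be j' where be: "be < length ns" "j' < ns ! be" "j = block_offset ns be + j'"
    using block_index_exists[OF j] by auto
  have entry: "block_of A ns 0 be $$ (i,j') = A $$ (i,j)"
    unfolding block_of_def using i be by (simp add: block_offset_0)
  show ?thesis
  proof (cases "be = 0")
    case True
    then have "block_of A ns 0 be = 1\<^sub>m (ns ! 0)" using nf ne unfolding block_normal_form_def by auto
    then show ?thesis using entry i be True by (simp add: block_offset_0)
  next
    case False
    then have "block_of A ns 0 be = 0\<^sub>m (ns ! 0) (ns ! be)"
      using nf be unfolding block_normal_form_def by auto
    moreover have "ns ! 0 \<le> block_offset ns be" using block_offset_ge_first False ne by simp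
    ultimately show ?thesis using entry i be by auto
  qed
qed

lemma block_normal_form_extend:
  assumes nf: "block_normal_form ns A'" and k: "0 < k" and X: "X \<in> carrier_mat (sum_list ns) k"
    and sub: "ns \<noteq> [] \<Longrightarrow> int_mat_rank (mat (ns ! 0) k (\<lambda>(i,j). X $$ (i,j))) = ns ! 0 \<and> ns ! 0 \<le> k"
  shows "block_normal_form (k # ns) (four_block_mat (1\<^sub>m k) (0\<^sub>m k (sum_list ns)) X A')"
proof -
  define A where "A = four_block_mat (1\<^sub>m k) (0\<^sub>m k (sum_list ns)) X A'"
  have A': "A' \<in> carrier_mat (sum_list ns) (sum_list ns)" using nf unfolding block_normal_form_def by auto
  note blocks = block_of_four_block[OF A_def one_carrier_mat zero_carrier_mat A' refl]
  have "\<forall>x\<in>set ns. x \<le> k"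
  proof
    fix x assume x: "x \<in> set ns"
    then obtain a rest where ns: "ns = a # rest" by (cases ns) auto
    have "x \<le> a" using x nf ns unfolding block_normal_form_def by auto
    then show "x \<le> k" using sub ns by simp
  qed
  then have sorted: "sorted_wrt (\<ge>) (k # ns)" using nf unfolding block_normal_form_def by simp
  have diag: "block_of A (k # ns) al al = 1\<^sub>m ((k # ns) ! al)" if "al < length (k # ns)" for al
    using that blocks(1,4) nf unfolding block_normal_form_def by (cases al) auto
  have upper: "block_of A (k # ns) al be = 0\<^sub>m ((k # ns) ! al) ((k # ns) ! be)"
    if lt: "al < be" "be < length (k # ns)" for al be
  proof -
    obtain be' where be: "be = Suc be'" "be' < length ns" using lt by (cases be) auto
    show ?thesis
    proof (cases al)
      case 0
      have "block_offset ns be' + ns ! be' \<le> sum_list ns" using block_offset_bound[OF be(2)] .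
      then show ?thesis using blocks(2)[OF be(2)] 0 be by (intro eq_matI) auto
    next
      case (Suc al')
      then show ?thesis using blocks(4)[of al' be'] nf lt be unfolding block_normal_form_def by auto
    qed
  qed
  have rank: "int_mat_rank (block_of A (k # ns) al (al - 1)) = (k # ns) ! al"
    if lt: "1 \<le> al" "al < length (k # ns)" for al
  proof -
    obtain al' where al: "al = Suc al'" "al' < length ns" using lt by (cases al) auto
    show ?thesis
    proof (cases al')
      case 0
      then show ?thesis using blocks(3) sub al by auto
    next
      case (Suc al'')
      then show ?thesis using blocks(4)[of al' al''] nf al unfolding block_normal_form_def by auto
    qed
  qed
  show ?thesis
    unfolding block_normal_form_def A_def[symmetric]
    using sorted diag upper rank k nf A' unfolding block_normal_form_def A_def by auto
qed

section \<open>The reduction step\<close>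

text \<open>Rewrite rules for associativity and distributivity of matrix products that only require
  the dimensions to match, so that the simplifier can normalize matrix expressions.\<close>
lemma mult_assoc_dims:
  assumes "dim_col A = dim_row B" "dim_col B = dim_row C"
  shows "A * B * C = A * (B * C)"
proof (rule assoc_mult_mat[of A "dim_row A" "dim_col A" B "dim_col B" C "dim_col C"])
  show "A \<in> carrier_mat (dim_row A) (dim_col A)" unfolding carrier_mat_def by blast
  show "B \<in> carrier_mat (dim_col A) (dim_col B)" unfolding carrier_mat_def using assms by simp
  show "C \<in> carrier_mat (dim_col B) (dim_col C)" unfolding carrier_mat_def using assms by simp
qed

lemma add_mult_dims:
  assumes "dim_row A = dim_row B" "dim_col A = dim_col B" "dim_col A = dim_row C"
  shows "(A + B) * C = A * C + B * (C :: 'a::semiring_0 mat)"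
proof (rule add_mult_distrib_mat[of A "dim_row A" "dim_col A" B C "dim_col C"])
  show "A \<in> carrier_mat (dim_row A) (dim_col A)" unfolding carrier_mat_def by blast
  show "B \<in> carrier_mat (dim_row A) (dim_col A)" unfolding carrier_mat_def using assms by simp
  show "C \<in> carrier_mat (dim_col A) (dim_col C)" unfolding carrier_mat_def using assms by simp
qed

lemma mult_add_dims:
  assumes "dim_col A = dim_row B" "dim_row B = dim_row C" "dim_col B = dim_col C"
  shows "A * (B + C) = A * B + A * (C :: 'a::semiring_0 mat)"
proof (rule mult_add_distrib_mat[of A "dim_row A" "dim_col A" B "dim_col B" C])
  show "A \<in> carrier_mat (dim_row A) (dim_col A)" unfolding carrier_mat_def by blast
  show "B \<in> carrier_mat (dim_col A) (dim_col B)" unfolding carrier_mat_def using assms by simp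
  show "C \<in> carrier_mat (dim_col A) (dim_col B)" unfolding carrier_mat_def using assms by simp
qed

lemmas mat_algebra_dims = carrier_matD index_mult_mat(2,3) index_add_mat(2,3)
  mult_assoc_dims add_mult_dims mult_add_dims

lemma zero_top_rows_block:
  fixes A :: "'a::zero mat"
  assumes A: "A \<in> carrier_mat (k+r) (k+r)"
    and zero: "\<And>i j. i < k \<Longrightarrow> j < k+r \<Longrightarrow> A $$ (i,j) = 0"
  shows "A = four_block_mat (0\<^sub>m k k) (0\<^sub>m k r)
               (mat r k (\<lambda>(i,j). A $$ (k+i, j))) (mat r r (\<lambda>(i,j). A $$ (k+i, k+j)))"
proof (rule eq_matI)
  fix i j
  assume "i < dim_row (four_block_mat (0\<^sub>m k k) (0\<^sub>m k r)
      (mat r k (\<lambda>(i,j). A $$ (k+i, j))) (mat r r (\<lambda>(i,j). A $$ (k+i, k+j))))"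
    and "j < dim_col (four_block_mat (0\<^sub>m k k) (0\<^sub>m k r)
      (mat r k (\<lambda>(i,j). A $$ (k+i, j))) (mat r r (\<lambda>(i,j). A $$ (k+i, k+j))))"
  then have ij: "i < k + r" "j < k + r" by auto
  consider "i < k" | "k \<le> i" "j < k" | "k \<le> i" "k \<le> j" by linarith
  then show "A $$ (i,j) = four_block_mat (0\<^sub>m k k) (0\<^sub>m k r)
      (mat r k (\<lambda>(i,j). A $$ (k+i, j))) (mat r r (\<lambda>(i,j). A $$ (k+i, k+j))) $$ (i,j)"
    by cases (use ij zero in auto)
qed (use A in auto)

lemma four_block_pow_lower:
  assumes C: "C \<in> carrier_mat r k" and D: "D \<in> carrier_mat r r"
  shows "\<exists>Y X. Y \<in> carrier_mat k k \<and> X \<in> carrier_mat r k \<and>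
     (four_block_mat (0\<^sub>m k k) (0\<^sub>m k r) C D) ^\<^sub>m m = four_block_mat Y (0\<^sub>m k r) X (D ^\<^sub>m m)"
proof (induction m)
  case 0
  have "four_block_mat (1\<^sub>m k) (0\<^sub>m k r) (0\<^sub>m r k) (D ^\<^sub>m 0) = 1\<^sub>m (k+r)"
    using D by (simp del: four_block_one_mat add: four_block_one_mat[of k r])
  then show ?case using D by (intro exI[of _ "1\<^sub>m k"] exI[of _ "0\<^sub>m r k"]) simp
next
  case (Suc m)
  then obtain Y X where YX: "Y \<in> carrier_mat k k" "X \<in> carrier_mat r k"
    "(four_block_mat (0\<^sub>m k k) (0\<^sub>m k r) C D) ^\<^sub>m m = four_block_mat Y (0\<^sub>m k r) X (D ^\<^sub>m m)" by blast
  have "(four_block_mat (0\<^sub>m k k) (0\<^sub>m k r) C D) ^\<^sub>m Suc m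
     = four_block_mat Y (0\<^sub>m k r) X (D ^\<^sub>m m) * four_block_mat (0\<^sub>m k k) (0\<^sub>m k r) C D"
    using YX by simp
  also have "\<dots> = four_block_mat (Y * 0\<^sub>m k k + 0\<^sub>m k r * C) (Y * 0\<^sub>m k r + 0\<^sub>m k r * D)
      (X * 0\<^sub>m k k + D ^\<^sub>m m * C) (X * 0\<^sub>m k r + D ^\<^sub>m m * D)"
    by (rule mult_four_block_mat[OF YX(1) zero_carrier_mat YX(2) pow_carrier_mat[OF D]
          zero_carrier_mat zero_carrier_mat C D])
  also have "\<dots> = four_block_mat (0\<^sub>m k k) (0\<^sub>m k r) (D ^\<^sub>m m * C) (D ^\<^sub>m Suc m)"
    using YX C D pow_carrier_mat[OF D, of m] by (intro cong_four_block_mat) auto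
  finally show ?case using C D by (intro exI[of _ "0\<^sub>m k k"] exI[of _ "D ^\<^sub>m m * C"]) auto
qed

lemma lower_block_nilpotent:
  assumes C: "C \<in> carrier_mat r k" and D: "D \<in> carrier_mat r r"
    and nil: "(four_block_mat (0\<^sub>m k k) (0\<^sub>m k r) C D) ^\<^sub>m m = 0\<^sub>m (k+r) (k+r)"
  shows "D ^\<^sub>m m = 0\<^sub>m r r"
proof (rule eq_matI)
  obtain Y X where YX: "Y \<in> carrier_mat k k" "X \<in> carrier_mat r k"
    "(four_block_mat (0\<^sub>m k k) (0\<^sub>m k r) C D) ^\<^sub>m m = four_block_mat Y (0\<^sub>m k r) X (D ^\<^sub>m m)"
    using four_block_pow_lower[OF C D] by blast
  fix i j assume "i < dim_row (0\<^sub>m r r :: 'a mat)" "j < dim_col (0\<^sub>m r r :: 'a mat)"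
  then have ij: "i < r" "j < r" by auto
  have "(D ^\<^sub>m m) $$ (i,j) = ((four_block_mat (0\<^sub>m k k) (0\<^sub>m k r) C D) ^\<^sub>m m) $$ (k+i, k+j)"
    using YX ij D by simp
  then show "(D ^\<^sub>m m) $$ (i,j) = 0\<^sub>m r r $$ (i,j)" using nil ij by simp
qed (use D in auto)

lemma lower_rows_mult:
  assumes M: "M \<in> carrier_mat d n" and B: "B \<in> carrier_mat n c"
  shows "lower_rows k (M * B) = lower_rows k M * map_mat rat_of_int B"
  by (rule eq_matI) (use M B in \<open>auto simp: lower_rows_def scalar_prod_def\<close>)

lemma lower_rows_block_right_inverse:
  fixes C D :: "int mat"
  assumes C: "C \<in> carrier_mat r k" and D: "D \<in> carrier_mat r r" and R: "R \<in> carrier_mat (k+r) r"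
    and inv: "lower_rows k (four_block_mat (0\<^sub>m k k) (0\<^sub>m k r) C D) * R = 1\<^sub>m r"
  shows "map_mat rat_of_int C * mat k r (\<lambda>(i,j). R $$ (i,j))
       + map_mat rat_of_int D * mat r r (\<lambda>(i,j). R $$ (k+i,j)) = 1\<^sub>m r"
proof -
  define R1 where "R1 = mat k r (\<lambda>(i,j). R $$ (i,j))"
  define R2 where "R2 = mat r r (\<lambda>(i,j). R $$ (k+i,j))"
  have R1: "R1 \<in> carrier_mat k r" and R2: "R2 \<in> carrier_mat r r" unfolding R1_def R2_def by auto
  have Cq: "map_mat rat_of_int C \<in> carrier_mat r k" and Dq: "map_mat rat_of_int D \<in> carrier_mat r r"
    using C D by auto
  have low: "lower_rows k (four_block_mat (0\<^sub>m k k) (0\<^sub>m k r) C D)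
      = four_block_mat (map_mat rat_of_int C) (map_mat rat_of_int D) (0\<^sub>m 0 k) (0\<^sub>m 0 r)"
    by (rule eq_matI) (use C D in \<open>auto simp: lower_rows_def\<close>)
  have Rblk: "R = four_block_mat R1 (0\<^sub>m k 0) R2 (0\<^sub>m r 0)"
    by (rule eq_matI) (use R R1 R2 in \<open>auto simp: R1_def R2_def\<close>)
  have "lower_rows k (four_block_mat (0\<^sub>m k k) (0\<^sub>m k r) C D) * R
     = four_block_mat (map_mat rat_of_int C * R1 + map_mat rat_of_int D * R2)
         (map_mat rat_of_int C * 0\<^sub>m k 0 + map_mat rat_of_int D * 0\<^sub>m r 0)
         (0\<^sub>m 0 k * R1 + 0\<^sub>m 0 r * R2) (0\<^sub>m 0 k * 0\<^sub>m k 0 + 0\<^sub>m 0 r * 0\<^sub>m r 0)"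
    unfolding low Rblk by (rule mult_four_block_mat[OF Cq Dq zero_carrier_mat zero_carrier_mat
        R1 zero_carrier_mat R2 zero_carrier_mat])
  then show ?thesis unfolding R1_def[symmetric] R2_def[symmetric]
    using inv Cq Dq R1 R2 by (intro eq_matI) (auto dest: arg_cong[of _ _ "\<lambda>M. M $$ _"])
qed

text \<open>A nilpotent matrix is singular, so its row echelon form has at least one zero row.\<close>
lemma nilpotent_row_echelon_pos:
  fixes N :: "int mat"
  assumes N: "N \<in> carrier_mat d d" and nil: "N ^\<^sub>m m = 0\<^sub>m d d" and d: "0 < d"
    and re: "row_echelon_by Q k N"
  shows "0 < k"
proof (rule ccontr)
  let ?q = "map_mat rat_of_int"
  assume "\<not> 0 < k"
  then have Q: "unimodular d Q" and indep: "lin_indep_rows (lower_rows 0 (Q * N))"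
    using re N unfolding row_echelon_by_def by auto
  have Qc: "Q \<in> carrier_mat d d" using unimodular_carrier[OF Q] .
  have low: "lower_rows 0 (Q * N) = ?q Q * ?q N"
  proof -
    have "lower_rows 0 Q = ?q Q" by (rule eq_matI) (auto simp: lower_rows_def)
    then show ?thesis using lower_rows_mult[OF Qc N] by simp
  qed
  have T: "lower_rows 0 (Q * N) \<in> carrier_mat d d" using lower_rows_carrier[of 0 "Q * N"] Qc N by simp
  obtain R where R: "R \<in> carrier_mat d d" "lower_rows 0 (Q * N) * R = 1\<^sub>m d"
    by (rule lin_indep_rows_right_inverse[OF T indep])
  have "?q N ^\<^sub>m m = ?q (N ^\<^sub>m m)" by (rule of_int_hom.mat_hom_pow[OF N, symmetric])
  also have "\<dots> = 0\<^sub>m d d" unfolding nil by (rule eq_matI) auto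
  finally have qnil: "?q N ^\<^sub>m m = 0\<^sub>m d d" .
  have XNY: "?q Q * ?q N * R = 1\<^sub>m d" using R(2) unfolding low .
  have qQ: "?q Q \<in> carrier_mat d d" and qN: "?q N \<in> carrier_mat d d" using Qc N by auto
  show False by (rule nilpotent_not_factor_of_one[OF qQ qN R(1) XNY qnil d])
qed

lemma of_int_mat_inverse:
  assumes "Q \<in> carrier_mat n n" "Qi \<in> carrier_mat n n" "Q * Qi = 1\<^sub>m n"
  shows "map_mat rat_of_int Q * map_mat rat_of_int Qi = 1\<^sub>m n"
proof -
  have "map_mat rat_of_int Q * map_mat rat_of_int Qi = map_mat rat_of_int (Q * Qi)"
    by (rule of_int_hom.mat_hom_mult[OF assms(1,2), symmetric])
  also have "\<dots> = 1\<^sub>m n" unfolding assms(3) by (rule of_int_hom.mat_hom_one)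
  finally show ?thesis .
qed

lemma lower_rows_conjugate_right_inverse:
  assumes M: "M \<in> carrier_mat d d" and Q: "Q \<in> carrier_mat d d" "Qi \<in> carrier_mat d d"
    and QiQ: "Qi * Q = 1\<^sub>m d" and R: "R \<in> carrier_mat d r" and inv: "lower_rows k M * R = 1\<^sub>m r"
  shows "lower_rows k (M * Qi) * (map_mat rat_of_int Q * R) = 1\<^sub>m r"
proof -
  let ?q = "map_mat rat_of_int"
  have qQiQ: "?q Qi * ?q Q = 1\<^sub>m d" by (rule of_int_mat_inverse[OF Q(2,1) QiQ])
  have qQ: "?q Q \<in> carrier_mat d d" and qQi: "?q Qi \<in> carrier_mat d d" using Q by auto
  have QiQR: "?q Qi * (?q Q * R) = R"
    using assoc_mult_mat[OF qQi qQ R] qQiQ R by simp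
  have L: "lower_rows k M \<in> carrier_mat (d - k) d" using lower_rows_carrier[of k M] M by simp
  have "lower_rows k (M * Qi) = lower_rows k M * ?q Qi" by (rule lower_rows_mult[OF M Q(2)])
  then have "lower_rows k (M * Qi) * (?q Q * R) = lower_rows k M * (?q Qi * (?q Q * R))"
    using assoc_mult_mat[OF L qQi mult_carrier_mat[OF qQ R]] by simp
  then show ?thesis unfolding QiQR inv .
qed

lemma conjugate_zero_top_rows:
  fixes N :: "'a::comm_ring_1 mat"
  assumes N: "N \<in> carrier_mat (k+r) (k+r)" and nil: "N ^\<^sub>m m = 0\<^sub>m (k+r) (k+r)"
    and Q: "Q \<in> carrier_mat (k+r) (k+r)" "Qi \<in> carrier_mat (k+r) (k+r)"
      "Q * Qi = 1\<^sub>m (k+r)" "Qi * Q = 1\<^sub>m (k+r)"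
    and top: "\<forall>i<k. \<forall>j<k+r. (Q * N) $$ (i,j) = 0"
  obtains C N' where "C \<in> carrier_mat r k" "N' \<in> carrier_mat r r"
    "Q * N * Qi = four_block_mat (0\<^sub>m k k) (0\<^sub>m k r) C N'" "N' ^\<^sub>m m = 0\<^sub>m r r"
proof -
  define A0 where "A0 = Q * N * Qi"
  have A0: "A0 \<in> carrier_mat (k+r) (k+r)" using Q N unfolding A0_def by auto
  have A0_top: "A0 $$ (i,j) = 0" if "i < k" "j < k + r" for i j
  proof -
    have "row (Q * N) i = 0\<^sub>v (k+r)" using top that Q N by (intro eq_vecI) auto
    moreover have "A0 $$ (i,j) = row (Q * N) i \<bullet> col Qi j"
      unfolding A0_def using that Q N by (intro index_mult_mat(1)) auto
    ultimately show ?thesis using Q that by simp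
  qed
  define C where "C = mat r k (\<lambda>(i,j). A0 $$ (k+i, j))"
  define N' where "N' = mat r r (\<lambda>(i,j). A0 $$ (k+i, k+j))"
  have C: "C \<in> carrier_mat r k" and N': "N' \<in> carrier_mat r r" unfolding C_def N'_def by auto
  have blocks: "A0 = four_block_mat (0\<^sub>m k k) (0\<^sub>m k r) C N'"
    unfolding C_def N'_def by (rule zero_top_rows_block[OF A0 A0_top])
  have "similar_mat_wit A0 N Q Qi"
    by (rule similar_mat_witI[of _ _ "k+r"]) (use Q N A0 in \<open>auto simp: A0_def\<close>)
  then have "A0 ^\<^sub>m m = Q * N ^\<^sub>m m * Qi" by (rule similar_mat_wit_pow_id)
  then have "A0 ^\<^sub>m m = 0\<^sub>m (k+r) (k+r)" using nil Q by simp
  then have "N' ^\<^sub>m m = 0\<^sub>m r r" using lower_block_nilpotent[OF C N'] blocks by simp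
  then show thesis using that[OF C N'] blocks unfolding A0_def by blast
qed

lemma nilpotent_reduction:
  fixes N :: "int mat"
  assumes N: "N \<in> carrier_mat d d" and nil: "N ^\<^sub>m m = 0\<^sub>m d d" and d: "0 < d"
  obtains Q Qi k r C N' R1 R2 where
    "Q \<in> carrier_mat d d" "Qi \<in> carrier_mat d d" "Q * Qi = 1\<^sub>m d" "Qi * Q = 1\<^sub>m d"
    "0 < k" "d = k + r" "C \<in> carrier_mat r k" "N' \<in> carrier_mat r r"
    "Q * N * Qi = four_block_mat (0\<^sub>m k k) (0\<^sub>m k r) C N'" "N' ^\<^sub>m m = 0\<^sub>m r r"
    "R1 \<in> carrier_mat k r" "R2 \<in> carrier_mat r r"
    "map_mat rat_of_int C * R1 + map_mat rat_of_int N' * R2 = 1\<^sub>m r"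
proof -
  obtain Q k where re: "row_echelon_by Q k N" using integer_row_echelon[OF N] by blast
  have k: "0 < k" by (rule nilpotent_row_echelon_pos[OF N nil d re])
  have Q: "unimodular d Q" and kd: "k \<le> d" and top: "\<forall>i<k. \<forall>j<d. (Q * N) $$ (i,j) = 0"
    and indep: "lin_indep_rows (lower_rows k (Q * N))" using re N unfolding row_echelon_by_def by auto
  obtain Qi where Qi: "Q \<in> carrier_mat d d" "Qi \<in> carrier_mat d d" "Q * Qi = 1\<^sub>m d" "Qi * Q = 1\<^sub>m d"
    using Q by (rule unimodularE)
  define r where "r = d - k"
  have dkr: "d = k + r" using kd unfolding r_def by simp
  obtain C N' where C: "C \<in> carrier_mat r k" and N': "N' \<in> carrier_mat r r"
    and blocks: "Q * N * Qi = four_block_mat (0\<^sub>m k k) (0\<^sub>m k r) C N'" and N'_nil: "N' ^\<^sub>m m = 0\<^sub>m r r"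
    using conjugate_zero_top_rows[OF N[unfolded dkr] nil[unfolded dkr] Qi[unfolded dkr] top[unfolded dkr]] .
  have T: "lower_rows k (Q * N) \<in> carrier_mat r d"
    using lower_rows_carrier[of k "Q * N"] Qi N unfolding r_def by simp
  obtain R where R: "R \<in> carrier_mat d r" "lower_rows k (Q * N) * R = 1\<^sub>m r"
    by (rule lin_indep_rows_right_inverse[OF T indep])
  have "lower_rows k (Q * N * Qi) * (map_mat rat_of_int Q * R) = 1\<^sub>m r"
    using lower_rows_conjugate_right_inverse[OF _ Qi(1,2,4) R] Qi N by simp
  then have "lower_rows k (four_block_mat (0\<^sub>m k k) (0\<^sub>m k r) C N') * (map_mat rat_of_int Q * R) = 1\<^sub>m r"
    unfolding blocks .
  moreover have "map_mat rat_of_int Q * R \<in> carrier_mat (k+r) r" using Qi R dkr by auto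
  ultimately have inv: "map_mat rat_of_int C * mat k r (\<lambda>(i,j). (map_mat rat_of_int Q * R) $$ (i,j))
      + map_mat rat_of_int N' * mat r r (\<lambda>(i,j). (map_mat rat_of_int Q * R) $$ (k+i,j)) = 1\<^sub>m r"
    using lower_rows_block_right_inverse[OF C N'] by blast
  show ?thesis by (rule that[OF Qi k dkr C N' blocks N'_nil _ _ inv]) auto
qed

lemma block_conjugation:
  fixes C N' P' P'i A' :: "'a::comm_ring_1 mat"
  assumes C: "C \<in> carrier_mat r k" and N': "N' \<in> carrier_mat r r"
    and P': "P' \<in> carrier_mat r r" "P'i \<in> carrier_mat r r" "P' * P'i = 1\<^sub>m r"
    and A': "A' \<in> carrier_mat r r" and conj: "(1\<^sub>m r + N') * P' = P' * A'"
  shows "(1\<^sub>m (k+r) + four_block_mat (0\<^sub>m k k) (0\<^sub>m k r) C N') * four_block_mat (1\<^sub>m k) (0\<^sub>m k r) (0\<^sub>m r k) P'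
       = four_block_mat (1\<^sub>m k) (0\<^sub>m k r) (0\<^sub>m r k) P' * four_block_mat (1\<^sub>m k) (0\<^sub>m k r) (P'i * C) A'"
proof -
  have N1: "1\<^sub>m r + N' \<in> carrier_mat r r" using N' by simp
  have X: "P'i * C \<in> carrier_mat r k" using P' C by simp
  have "1\<^sub>m (k+r) + four_block_mat (0\<^sub>m k k) (0\<^sub>m k r) C N'
      = four_block_mat (1\<^sub>m k + 0\<^sub>m k k) (0\<^sub>m k r + 0\<^sub>m k r) (0\<^sub>m r k + C) (1\<^sub>m r + N')"
    unfolding four_block_one_mat[symmetric] by (rule add_four_block_mat) (use C N' in auto)
  also have "\<dots> = four_block_mat (1\<^sub>m k) (0\<^sub>m k r) C (1\<^sub>m r + N')" using C by simp
  finally have one_plus: "1\<^sub>m (k+r) + four_block_mat (0\<^sub>m k k) (0\<^sub>m k r) C N'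
      = four_block_mat (1\<^sub>m k) (0\<^sub>m k r) C (1\<^sub>m r + N')" .
  have lhs: "four_block_mat (1\<^sub>m k) (0\<^sub>m k r) C (1\<^sub>m r + N') * four_block_mat (1\<^sub>m k) (0\<^sub>m k r) (0\<^sub>m r k) P'
      = four_block_mat (1\<^sub>m k) (0\<^sub>m k r) C ((1\<^sub>m r + N') * P')"
    by (subst mult_four_block_mat[OF one_carrier_mat zero_carrier_mat C N1 one_carrier_mat
          zero_carrier_mat zero_carrier_mat P'(1)])
      (use C N1 P' in \<open>simp add: right_mult_zero_mat[OF N1] right_add_zero_mat[OF C]\<close>)
  have "P' * (P'i * C) = C" using assoc_mult_mat[OF P'(1,2) C] P'(3) C by simp
  then have rhs: "four_block_mat (1\<^sub>m k) (0\<^sub>m k r) (0\<^sub>m r k) P' * four_block_mat (1\<^sub>m k) (0\<^sub>m k r) (P'i * C) A'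
      = four_block_mat (1\<^sub>m k) (0\<^sub>m k r) C (P' * A')"
    by (subst mult_four_block_mat[OF one_carrier_mat zero_carrier_mat zero_carrier_mat P'(1)
          one_carrier_mat zero_carrier_mat X A'])
      (use X A' P' C in \<open>simp add: left_add_zero_mat[OF C]\<close>)
  show ?thesis unfolding one_plus lhs rhs conj ..
qed

lemma conjugation_step:
  fixes N Q Qi D A :: "'a::comm_ring_1 mat"
  assumes N: "N \<in> carrier_mat d d" and Q: "Q \<in> carrier_mat d d" "Qi \<in> carrier_mat d d"
    and QiQ: "Qi * Q = 1\<^sub>m d" and D: "D \<in> carrier_mat d d" and A: "A \<in> carrier_mat d d"
    and conj: "(1\<^sub>m d + Q * N * Qi) * D = D * A"
  shows "(1\<^sub>m d + N) * (Qi * D) = (Qi * D) * A"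
proof -
  have "Qi * (Q * N * Qi) = Qi * Q * (N * Qi)" using Q N by (simp add: mat_algebra_dims)
  also have "\<dots> = N * Qi" using QiQ left_mult_one_mat[OF mult_carrier_mat[OF N Q(2)]] by simp
  finally have QiQNQi: "Qi * (Q * N * Qi) = N * Qi" .
  have "Qi * (1\<^sub>m d + Q * N * Qi) = Qi * 1\<^sub>m d + Qi * (Q * N * Qi)"
    by (rule mult_add_distrib_mat) (use Q N in auto)
  also have "\<dots> = (1\<^sub>m d + N) * Qi"
    unfolding QiQNQi using add_mult_distrib_mat[OF one_carrier_mat N Q(2)] Q by simp
  finally have shift: "Qi * (1\<^sub>m d + Q * N * Qi) = (1\<^sub>m d + N) * Qi" .
  have "(1\<^sub>m d + N) * (Qi * D) = (1\<^sub>m d + N) * Qi * D"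
    by (rule assoc_mult_mat[symmetric]) (use N Q D in auto)
  also have "\<dots> = Qi * ((1\<^sub>m d + Q * N * Qi) * D)"
    unfolding shift[symmetric] by (rule assoc_mult_mat) (use N Q D in auto)
  also have "\<dots> = Qi * D * A"
    unfolding conj by (rule assoc_mult_mat[symmetric]) (use Q D A in auto)
  finally show ?thesis .
qed

lemma conjugate_right_inverse:
  fixes C N P Pi :: "'a::comm_ring_1 mat"
  assumes C: "C \<in> carrier_mat r k" and N: "N \<in> carrier_mat r r"
    and P: "P \<in> carrier_mat r r" "Pi \<in> carrier_mat r r" "P * Pi = 1\<^sub>m r" "Pi * P = 1\<^sub>m r"
    and R: "R1 \<in> carrier_mat k r" "R2 \<in> carrier_mat r r" and inv: "C * R1 + N * R2 = 1\<^sub>m r"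
  shows "(Pi * C) * (R1 * P) + (Pi * N * P) * (Pi * R2 * P) = 1\<^sub>m r"
proof -
  have cancel: "P * (Pi * W) = W" if "W \<in> carrier_mat r c" for W c
    using assoc_mult_mat[OF P(1,2) that] P(3) that by simp
  have "(Pi * C) * (R1 * P) + (Pi * N * P) * (Pi * R2 * P) = Pi * (C * R1 + N * R2) * P"
    using C N P R by (simp add: mat_algebra_dims cancel[OF mult_carrier_mat[OF R(2) P(1)]])
  then show ?thesis using inv P by simp
qed

lemma top_rows_right_inverse:
  fixes X U Z V :: "'a::comm_ring_1 mat"
  assumes X: "X \<in> carrier_mat r k" and U: "U \<in> carrier_mat k r"
    and Z: "Z \<in> carrier_mat r r" and V: "V \<in> carrier_mat r r"
    and inv: "X * U + Z * V = 1\<^sub>m r" and top: "\<And>i j. i < n \<Longrightarrow> j < r \<Longrightarrow> Z $$ (i,j) = 0"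
    and n: "n \<le> r"
  shows "mat n k (\<lambda>(i,j). X $$ (i,j)) * mat k n (\<lambda>(i,j). U $$ (i,j)) = 1\<^sub>m n"
proof (rule eq_matI)
  fix i j assume "i < dim_row (1\<^sub>m n :: 'a mat)" "j < dim_col (1\<^sub>m n :: 'a mat)"
  then have ij: "i < n" "j < n" and ijr: "i < r" "j < r" using n by auto
  have "row Z i = 0\<^sub>v r" using top ij ijr Z by (intro eq_vecI) auto
  then have "(Z * V) $$ (i,j) = 0" using ijr Z V by simp
  then have "(X * U) $$ (i,j) = 1\<^sub>m r $$ (i,j)"
    using arg_cong[OF inv, of "\<lambda>M. M $$ (i,j)"] ijr X U Z V by simp
  moreover have "row (mat n k (\<lambda>(i,j). X $$ (i,j))) i = row X i" using ij n X by (intro eq_vecI) auto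
  moreover have "col (mat k n (\<lambda>(i,j). U $$ (i,j))) j = col U j" using ij n U by (intro eq_vecI) auto
  ultimately show "(mat n k (\<lambda>(i,j). X $$ (i,j)) * mat k n (\<lambda>(i,j). U $$ (i,j))) $$ (i,j) = 1\<^sub>m n $$ (i,j)"
    using ij ijr X U by simp
qed auto

lemma subdiagonal_block_rank:
  fixes C N' P' P'i A' :: "int mat" and R1 R2 :: "rat mat"
  assumes C: "C \<in> carrier_mat r k" and N': "N' \<in> carrier_mat r r"
    and P': "P' \<in> carrier_mat r r" "P'i \<in> carrier_mat r r" "P' * P'i = 1\<^sub>m r" "P'i * P' = 1\<^sub>m r"
    and A': "A' \<in> carrier_mat r r" and conj: "(1\<^sub>m r + N') * P' = P' * A'"
    and R: "R1 \<in> carrier_mat k r" "R2 \<in> carrier_mat r r"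
    and inv: "map_mat rat_of_int C * R1 + map_mat rat_of_int N' * R2 = 1\<^sub>m r"
    and top: "\<And>i j. i < n \<Longrightarrow> j < r \<Longrightarrow> A' $$ (i,j) = (if i = j then 1 else 0)" and n: "n \<le> r"
  shows "int_mat_rank (mat n k (\<lambda>(i,j). (P'i * C) $$ (i,j))) = n \<and> n \<le> k"
proof -
  let ?q = "map_mat rat_of_int"
  define Z where "Z = P'i * N' * P'"
  have Z: "Z \<in> carrier_mat r r" unfolding Z_def using P' N' by auto
  have "A' = P'i * (P' * A')" using assoc_mult_mat[OF P'(2,1) A'] P'(4) A' by simp
  also have "\<dots> = P'i * ((1\<^sub>m r + N') * P')" unfolding conj ..
  also have "\<dots> = 1\<^sub>m r + Z" unfolding Z_def using P' N' by (simp add: mat_algebra_dims)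
  finally have A'Z: "A' = 1\<^sub>m r + Z" .
  have Z_top: "Z $$ (i,j) = 0" if "i < n" "j < r" for i j
    using top[OF that] arg_cong[OF A'Z, of "\<lambda>M. M $$ (i,j)"] that n Z by simp
  have qC: "?q (P'i * C) = ?q P'i * ?q C" by (rule of_int_hom.mat_hom_mult[OF P'(2) C])
  have qZ: "?q Z = ?q P'i * ?q N' * ?q P'"
    unfolding Z_def of_int_hom.mat_hom_mult[OF mult_carrier_mat[OF P'(2) N'] P'(1)]
      of_int_hom.mat_hom_mult[OF P'(2) N'] ..
  have qPPi: "?q P' * ?q P'i = 1\<^sub>m r" by (rule of_int_mat_inverse[OF P'(1,2,3)])
  have qPiP: "?q P'i * ?q P' = 1\<^sub>m r" by (rule of_int_mat_inverse[OF P'(2,1,4)])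
  have rel: "?q (P'i * C) * (R1 * ?q P') + ?q Z * (?q P'i * R2 * ?q P') = 1\<^sub>m r"
    unfolding qC qZ using conjugate_right_inverse[of "?q C" r k "?q N'" "?q P'" "?q P'i" R1 R2]
      C N' P' R inv qPPi qPiP by auto
  have qZ_top: "?q Z $$ (i,j) = 0" if "i < n" "j < r" for i j using Z_top[OF that] that n Z by simp
  have "mat n k (\<lambda>(i,j). ?q (P'i * C) $$ (i,j)) * mat k n (\<lambda>(i,j). (R1 * ?q P') $$ (i,j)) = 1\<^sub>m n"
    by (rule top_rows_right_inverse[OF _ _ _ _ rel qZ_top n]) (use C P' R Z in auto)
  moreover have "mat n k (\<lambda>(i,j). ?q (P'i * C) $$ (i,j)) = ?q (mat n k (\<lambda>(i,j). (P'i * C) $$ (i,j)))"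
    by (rule eq_matI) (use n C P' in auto)
  ultimately have "?q (mat n k (\<lambda>(i,j). (P'i * C) $$ (i,j))) * mat k n (\<lambda>(i,j). (R1 * ?q P') $$ (i,j))
      = 1\<^sub>m n" by simp
  from right_inverse_int_rank[OF _ _ this] show ?thesis
    using mat_carrier[of n k] mat_carrier[of k n] by blast
qed

lemma nilpotent_block_normal_form:
  fixes N :: "int mat"
  assumes "N \<in> carrier_mat d d" and "N ^\<^sub>m m = 0\<^sub>m d d"
  shows "\<exists>ns P A. sum_list ns = d \<and> unimodular d P \<and> (1\<^sub>m d + N) * P = P * A \<and> block_normal_form ns A"
  using assms
proof (induction d arbitrary: N rule: less_induct)
  case (less d)
  note N = less.prems(1) and nil = less.prems(2)
  show ?case
  proof (cases "d = 0")
    case True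
    then have "block_normal_form [] (1\<^sub>m d)" unfolding block_normal_form_def by auto
    then show ?thesis using N True by (intro exI[of _ "[]"] exI[of _ "1\<^sub>m 0"]) (auto simp: unimodular_one)
  next
    case False
    then obtain Q Qi k r C N' R1 R2 where
      Q: "Q \<in> carrier_mat d d" "Qi \<in> carrier_mat d d" "Q * Qi = 1\<^sub>m d" "Qi * Q = 1\<^sub>m d"
      and k: "0 < k" and dkr: "d = k + r" and C: "C \<in> carrier_mat r k" and N': "N' \<in> carrier_mat r r"
      and blocks: "Q * N * Qi = four_block_mat (0\<^sub>m k k) (0\<^sub>m k r) C N'" and N'_nil: "N' ^\<^sub>m m = 0\<^sub>m r r"
      and R: "R1 \<in> carrier_mat k r" "R2 \<in> carrier_mat r r"
      and inv: "map_mat rat_of_int C * R1 + map_mat rat_of_int N' * R2 = 1\<^sub>m r"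
      using nilpotent_reduction[OF N nil] by blast
    have "r < d" using k dkr by simp
    then obtain ns' P' A' where sum: "sum_list ns' = r" and P': "unimodular r P'"
      and conj': "(1\<^sub>m r + N') * P' = P' * A'" and nf': "block_normal_form ns' A'"
      using less.IH[OF _ N' N'_nil] by blast
    obtain P'i where P'i: "P' \<in> carrier_mat r r" "P'i \<in> carrier_mat r r" "P' * P'i = 1\<^sub>m r" "P'i * P' = 1\<^sub>m r"
      using P' by (rule unimodularE)
    have A': "A' \<in> carrier_mat r r" using nf' sum unfolding block_normal_form_def by auto
    define D where "D = four_block_mat (1\<^sub>m k) (0\<^sub>m k r) (0\<^sub>m r k) P'"
    define A where "A = four_block_mat (1\<^sub>m k) (0\<^sub>m k r) (P'i * C) A'"
    have D: "unimodular d D" unfolding D_def dkr by (rule unimodular_block_diag[OF unimodular_one P'])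
    have A: "A \<in> carrier_mat d d" unfolding A_def dkr using A' P'i C by auto
    have "(1\<^sub>m d + N) * (Qi * D) = (Qi * D) * A"
      by (rule conjugation_step[OF N Q(1,2,4) unimodular_carrier[OF D] A])
        (use block_conjugation[OF C N' P'i(1,2,3) A' conj'] blocks dkr in \<open>simp add: D_def A_def\<close>)
    moreover have "unimodular d (Qi * D)" by (rule unimodular_mult[OF unimodularI[OF Q(2,1,4,3)] D])
    moreover have "block_normal_form (k # ns') A"
    proof -
      have "int_mat_rank (mat (ns' ! 0) k (\<lambda>(i,j). (P'i * C) $$ (i,j))) = ns' ! 0 \<and> ns' ! 0 \<le> k"
        if ne: "ns' \<noteq> []"
      proof (rule subdiagonal_block_rank[OF C N' P'i A' conj' R inv])
        show "A' $$ (i,j) = (if i = j then 1 else 0)" if "i < ns' ! 0" "j < r" for i j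
          using block_normal_form_top_rows[OF nf' ne] that sum by simp
        show "ns' ! 0 \<le> r" using block_offset_bound[of 0 ns'] ne sum by (simp add: block_offset_0)
      qed
      then show ?thesis
        unfolding A_def using block_normal_form_extend[OF nf' k] P'i C sum by auto
    qed
    ultimately show ?thesis using sum dkr by (intro exI[of _ "k # ns'"] exI[of _ "Qi * D"] exI[of _ A]) auto
  qed
qed

theorem mainTheorem11:
  fixes S :: "int mat" and d :: nat
  assumes "S \<in> carrier_mat d d"
    and "invertible_mat S"
    and "spectrum (map_mat complex_of_int S) = {1}"
  shows "\<exists>ns :: nat list. \<exists>P A :: int mat.
           sorted_wrt (\<ge>) ns \<and> (\<forall>n \<in> set ns. n > 0) \<and> sum_list ns = d \<and>
           P \<in> carrier_mat d d \<and> invertible_mat P \<and>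
           A \<in> carrier_mat d d \<and> S * P = P * A \<and>
           (\<forall>al < length ns. block_of A ns al al = 1\<^sub>m (ns ! al)) \<and>
           (\<forall>al be. al < be \<and> be < length ns \<longrightarrow> block_of A ns al be = 0\<^sub>m (ns ! al) (ns ! be)) \<and>
           (\<forall>al. 1 \<le> al \<and> al < length ns \<longrightarrow> int_mat_rank (block_of A ns al (al - 1)) = ns ! al)"
proof -
  have N: "S - 1\<^sub>m d \<in> carrier_mat d d" using assms(1) unfolding carrier_mat_def by auto
  have S: "1\<^sub>m d + (S - 1\<^sub>m d) = S" using assms(1) by (intro eq_matI) auto
  obtain ns P A where "sum_list ns = d" and P: "unimodular d P" and "S * P = P * A"
    and "block_normal_form ns A"
    using nilpotent_block_normal_form[OF N unipotent_nilpotent[OF assms(1,3)]] unfolding S by blast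
  moreover note unimodular_carrier[OF P] unimodular_invertible_mat[OF P]
  ultimately show ?thesis unfolding block_normal_form_def by blast
qed

end
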